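(* Let $G_1$ and $G_2$ be vertex-disjoint graphs (each with at least one edge) that admit identical biarithmetic IASIs. Then the join $G_1+G_2$ does not admit an identical biarithmetic IASI.
   Context: All graphs are simple, finite, with no isolated vertices; all sets are finite subsets of $\mathbb{N}_0$; $A+B=\{a+b:a\in A,b\in B\}$. An IASI of $G$ is an injective $f:V(G)\to 2^{\mathbb{N}_0}$ with $g_f(uv)=f(u)+f(v)$ injective on $E(G)$. An AP-set is a set whose elements form an arithmetic progression; its common difference is the deterministic index of the element it labels. An arithmetic IASI is an IASI under which all vertex and edge set-labels are AP-sets. A biarithmetic IASI is an arithmetic IASI such that for adjacent vertices $v_i,v_j$ with deterministic indices $d_i,d_j$, one of $d_i,d_j$ is a positive integral multiple of the other; it is identical biarithmetic if this multiplier $k$ (with the larger index equal to $k$ times the smaller) is the same for all pairs of adjacent vertices. The join $G_1+G_2$ has vertex set $V_1\cup V_2$ and edge set $E_1\cup E_2\cup\{uv:u\in V_1,v\in V_2\}$. *)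

theory Defs
  imports Main
begin

definition simple_graph :: "'a set \<Rightarrow> 'a set set \<Rightarrow> bool" where
  "simple_graph V E \<longleftrightarrow> finite V \<and>
     E \<subseteq> {{u, v} | u v. u \<in> V \<and> v \<in> V \<and> u \<noteq> v} \<and>
     (\<forall>v\<in>V. \<exists>e\<in>E. v \<in> e)"

definition join_edges :: "'a set \<Rightarrow> 'a set set \<Rightarrow> 'a set \<Rightarrow> 'a set set \<Rightarrow> 'a set set" where
  "join_edges V1 E1 V2 E2 = E1 \<union> E2 \<union> {{u, v} | u v. u \<in> V1 \<and> v \<in> V2}"

definition sumset :: "nat set \<Rightarrow> nat set \<Rightarrow> nat set" where
  "sumset A B = {a + b | a b. a \<in> A \<and> b \<in> B}"

definition AP_set :: "nat set \<Rightarrow> bool" where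
  "AP_set A \<longleftrightarrow> (\<exists>a d n. d > 0 \<and> n \<ge> 3 \<and> A = (\<lambda>i. a + i * d) ` {..<n})"

definition det_index :: "nat set \<Rightarrow> nat" where
  "det_index A = (THE d. d > 0 \<and> (\<exists>a n. n \<ge> 3 \<and> A = (\<lambda>i. a + i * d) ` {..<n}))"

definition IASI :: "'a set \<Rightarrow> 'a set set \<Rightarrow> ('a \<Rightarrow> nat set) \<Rightarrow> bool" where
  "IASI V E f \<longleftrightarrow> inj_on f V \<and> (\<forall>v\<in>V. finite (f v)) \<and>
     (\<forall>u v x y. {u, v} \<in> E \<and> {x, y} \<in> E \<and> sumset (f u) (f v) = sumset (f x) (f y)
        \<longrightarrow> {u, v} = {x, y})"

definition arithmetic_IASI :: "'a set \<Rightarrow> 'a set set \<Rightarrow> ('a \<Rightarrow> nat set) \<Rightarrow> bool" where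
  "arithmetic_IASI V E f \<longleftrightarrow> IASI V E f \<and> (\<forall>v\<in>V. AP_set (f v)) \<and>
     (\<forall>u v. {u, v} \<in> E \<longrightarrow> AP_set (sumset (f u) (f v)))"

definition identical_biarithmetic_IASI_with ::
  "'a set \<Rightarrow> 'a set set \<Rightarrow> ('a \<Rightarrow> nat set) \<Rightarrow> nat \<Rightarrow> bool" where
  "identical_biarithmetic_IASI_with V E f k \<longleftrightarrow> arithmetic_IASI V E f \<and> k \<ge> 2 \<and>
     (\<forall>u v. {u, v} \<in> E \<longrightarrow>
        det_index (f v) = k * det_index (f u) \<or> det_index (f u) = k * det_index (f v))"

definition admits_identical_biarithmetic_IASI :: "'a set \<Rightarrow> 'a set set \<Rightarrow> bool" where
  "admits_identical_biarithmetic_IASI V E \<longleftrightarrow>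
     (\<exists>f k. identical_biarithmetic_IASI_with V E f k)"

end

theory Submission
  imports Defs
begin

(*
  The join G1 + G2 contains a triangle: an edge uv of G1 together with
  any vertex w of G2 (which is adjacent to both u and v in the join).  A graph with an
  identical biarithmetic IASI of multiplier k >= 2 has no triangle: along every edge
  the deterministic index is multiplied or divided by k, so the three positive indices
  around a triangle would satisfy three such relations, and comparing the
  strict inequalities x < k * x shows this is impossible (an odd closed walk cannot
  return to its start when each step changes the k-adic "level" by exactly one).
*)

lemma AP_two_least_elements:
  fixes a d n :: nat
  assumes "n \<ge> 3" "d > 0" "A = (\<lambda>i. a + i * d) ` {..<n}"
  shows "a \<in> A" "\<forall>x\<in>A. a \<le> x" "a + d \<in> A" "\<forall>x\<in>A. x \<noteq> a \<longrightarrow> a + d \<le> x"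
proof -
  show "a \<in> A" "\<forall>x\<in>A. a \<le> x" using assms by auto
  show "a + d \<in> A" using assms by (auto intro!: image_eqI[where x=1])
  show "\<forall>x\<in>A. x \<noteq> a \<longrightarrow> a + d \<le> x"
  proof (intro ballI impI)
    fix x assume "x \<in> A" "x \<noteq> a"
    then obtain i where "x = a + i * d" "i \<noteq> 0" using assms by auto
    then show "a + d \<le> x" by (cases i) auto
  qed
qed

lemma AP_common_difference_unique:
  fixes a b d e n m :: nat
  assumes "n \<ge> 3" "d > 0" "A = (\<lambda>i. a + i * d) ` {..<n}"
    and "m \<ge> 3" "e > 0" "A = (\<lambda>i. b + i * e) ` {..<m}"
  shows "d = e"
proof -
  note P = AP_two_least_elements[OF assms(1-3)]
  note Q = AP_two_least_elements[OF assms(4-6)]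
  have "a = b" using P(1,2) Q(1,2) by (meson order_antisym)
  have "b + e \<noteq> a" "a + d \<noteq> b" using \<open>a = b\<close> assms(2,5) by simp_all
  then have "a + d \<le> b + e" "b + e \<le> a + d" using P(3,4) Q(3,4) by blast+
  then show ?thesis using \<open>a = b\<close> by simp
qed

lemma det_index_pos:
  assumes "AP_set A"
  shows "det_index A > 0"
proof -
  obtain a d n where h: "d > 0" "n \<ge> 3" "A = (\<lambda>i. a + i * d) ` {..<n}"
    using assms unfolding AP_set_def by blast
  have "\<exists>!d. d > 0 \<and> (\<exists>a n. n \<ge> 3 \<and> A = (\<lambda>i. a + i * d) ` {..<n})"
  proof (rule ex1I[of _ d])
    show "d > 0 \<and> (\<exists>a n. n \<ge> 3 \<and> A = (\<lambda>i. a + i * d) ` {..<n})" using h by blast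
  next
    fix e assume "e > 0 \<and> (\<exists>a n. n \<ge> 3 \<and> A = (\<lambda>i. a + i * e) ` {..<n})"
    then show "e = d" using AP_common_difference_unique[OF h(2,1,3)] by metis
  qed
  from theI'[OF this] show ?thesis unfolding det_index_def by blast
qed

lemma no_k_multiple_triangle:
  fixes a b c k :: nat
  assumes "a > 0" "b > 0" "c > 0" "k \<ge> 2"
    and "b = k * a \<or> a = k * b" "c = k * a \<or> a = k * c" "c = k * b \<or> b = k * c"
  shows False
proof -
  have "a < k * a" "b < k * b" "c < k * c" using assms(1-4) by simp_all
  then show False using assms(5-7) by linarith
qed

lemma identical_biarithmetic_IASI_triangle_free:
  assumes f: "identical_biarithmetic_IASI_with V E f k"
    and V: "x \<in> V" "y \<in> V" "z \<in> V"
    and E: "{x, y} \<in> E" "{x, z} \<in> E" "{y, z} \<in> E"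
  shows False
proof -
  have "arithmetic_IASI V E f" and k: "k \<ge> 2"
    and rel: "\<And>u v. {u, v} \<in> E \<Longrightarrow>
        det_index (f v) = k * det_index (f u) \<or> det_index (f u) = k * det_index (f v)"
    using f unfolding identical_biarithmetic_IASI_with_def by blast+
  then have "\<And>v. v \<in> V \<Longrightarrow> det_index (f v) > 0"
    unfolding arithmetic_IASI_def using det_index_pos by blast
  then have "det_index (f x) > 0" "det_index (f y) > 0" "det_index (f z) > 0"
    using V by blast+
  then show False
    using no_k_multiple_triangle[OF _ _ _ k rel[OF E(1)] rel[OF E(2)] rel[OF E(3)]]
    by blast
qed

lemma join_has_triangle:
  assumes "simple_graph V1 E1" "simple_graph V2 E2" "E1 \<noteq> {}" "E2 \<noteq> {}"
  obtains u v w where "u \<in> V1" "v \<in> V1" "w \<in> V2"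
    and "{u, v} \<in> join_edges V1 E1 V2 E2" "{u, w} \<in> join_edges V1 E1 V2 E2"
    and "{v, w} \<in> join_edges V1 E1 V2 E2"
proof -
  obtain u v where uv: "{u, v} \<in> E1" "u \<in> V1" "v \<in> V1"
    using assms(1,3) unfolding simple_graph_def by blast
  obtain w where "w \<in> V2"
    using assms(2,4) unfolding simple_graph_def by blast
  with uv show thesis
    by (intro that[of u v w]) (auto simp: join_edges_def)
qed

theorem mainTheorem6:
  fixes V1 V2 :: "'a set" and E1 E2 :: "'a set set"
  assumes "simple_graph V1 E1" and "simple_graph V2 E2"
    and "V1 \<inter> V2 = {}"
    and "E1 \<noteq> {}" and "E2 \<noteq> {}"
    and "admits_identical_biarithmetic_IASI V1 E1"
    and "admits_identical_biarithmetic_IASI V2 E2"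
  shows "\<not> admits_identical_biarithmetic_IASI (V1 \<union> V2) (join_edges V1 E1 V2 E2)"
proof
  assume "admits_identical_biarithmetic_IASI (V1 \<union> V2) (join_edges V1 E1 V2 E2)"
  then obtain f k
    where f: "identical_biarithmetic_IASI_with (V1 \<union> V2) (join_edges V1 E1 V2 E2) f k"
    unfolding admits_identical_biarithmetic_IASI_def by blast
  obtain u v w where "u \<in> V1" "v \<in> V1" "w \<in> V2"
    and "{u, v} \<in> join_edges V1 E1 V2 E2" "{u, w} \<in> join_edges V1 E1 V2 E2"
    and "{v, w} \<in> join_edges V1 E1 V2 E2"
    using join_has_triangle[OF assms(1,2,4,5)] .
  then show False
    using identical_biarithmetic_IASI_triangle_free[OF f, of u v w] by blast
qed

end
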